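(* Let $n\ge 2$, $M_1\in\mathbb N^+$, $\gamma$ Euler's constant, and $M=\lceil e(\log(n-1)+\gamma)\rceil+M_1$. Then $$\sum_{m=M+1}^{n}\frac{s_u(n,m)}{n!}\le\exp(-M_1),$$ i.e. the probability $P(s_u(n,m>M))$ that a uniformly random permutation of $\{1,\dots,n\}$ has more than $M$ cycles is at most $\exp(-M_1)$.
   Context: $s_u(n,m)$ denotes the unsigned Stirling number of the first kind (the number of permutations of $\{1,\dots,n\}$ with exactly $m$ cycles), and $P(s_u(n,m))=s_u(n,m)/n!$. $\log$ is the natural logarithm. *)

theory Defs
  imports "HOL-Analysis.Analysis" "HOL-Combinatorics.Stirling"
begin

end

theory Submission
  imports Defs
begin

text \<open>
  Chernoff's method with the generating function of the cycle counts: since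
  \<open>\<Sum>\<^sub>m s\<^sub>u(n,m) x\<^sup>m = x(x+1)\<dots>(x+n-1)\<close>, for every \<open>x \<ge> 1\<close> the tail beyond \<open>M\<close>
  is at most \<open>x(x+1)\<dots>(x+n-1) / (n! x\<^sup>M\<^sup>+\<^sup>1)\<close>. Take \<open>x = e\<close> and bound each factor
  \<open>(e+k)/(k+1) = 1 + (e-1)/(k+1)\<close> by \<open>exp ((e-1)/(k+1))\<close> for \<open>k \<ge> 1\<close>; this gives
  \<open>exp (1 + (e-1)(H\<^sub>n - 1) - (M+1))\<close>. Finally \<open>H\<^sub>n - 1 \<le> log (n-1) + 1/2\<close> and
  \<open>(e-1)/2 \<le> e\<gamma>\<close> (as \<open>\<gamma> > 1/2\<close>) bring the exponent below \<open>-M\<^sub>1\<close>.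
\<close>

lemma stirling_tail_le_pochhammer:
  fixes x :: real
  assumes "x \<ge> 1"
  shows "(\<Sum>m = k..n. real (stirling n m)) \<le> pochhammer x n / x ^ k"
proof -
  have "(\<Sum>m = k..n. real (stirling n m)) \<le> (\<Sum>m = k..n. real (stirling n m) * x ^ m / x ^ k)"
  proof (rule sum_mono)
    fix m assume "m \<in> {k..n}"
    then have "1 \<le> x ^ m / x ^ k"
      using assms by (simp add: power_increasing)
    then show "real (stirling n m) \<le> real (stirling n m) * x ^ m / x ^ k"
      using mult_left_mono[of 1 "x ^ m / x ^ k" "real (stirling n m)"] by simp
  qed
  also have "\<dots> \<le> (\<Sum>m\<le>n. real (stirling n m) * x ^ m / x ^ k)"
    using assms by (intro sum_mono2) auto
  also have "\<dots> = pochhammer x n / x ^ k"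
    by (simp add: sum_divide_distrib[symmetric] stirling_pochhammer)
  finally show ?thesis .
qed

text \<open>The first factor \<open>x\<close> is kept exact: bounding it by \<open>exp (x - 1)\<close> as well
  would make the final estimate fail for \<open>n = 2\<close>.\<close>

lemma pochhammer_div_fact_le_exp_harm:
  fixes x :: real
  assumes "x \<ge> 0" and "n \<ge> 1"
  shows "pochhammer x n / fact n \<le> x * exp ((x - 1) * (harm n - 1))"
  using assms(2)
proof (induction n rule: dec_induct)
  case base
  then show ?case by (simp add: harm_expand)
next
  case (step n)
  have factor: "(x + n) / (n + 1) \<le> exp ((x - 1) / (n + 1))"
  proof -
    have "(x + n) / (n + 1) = 1 + (x - 1) / (n + 1)"
      by (simp add: field_simps)
    then show ?thesis
      using exp_ge_add_one_self by presburger
  qed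
  have "pochhammer x (Suc n) / fact (Suc n) = pochhammer x n / fact n * ((x + n) / (n + 1))"
    by (simp add: pochhammer_rec' field_simps)
  also have "\<dots> \<le> x * exp ((x - 1) * (harm n - 1)) * exp ((x - 1) / (n + 1))"
    using assms(1) by (intro mult_mono step.IH factor) (simp_all add: pochhammer_pos)
  also have "\<dots> = x * exp ((x - 1) * (harm (Suc n) - 1))"
    by (simp add: harm_Suc algebra_simps inverse_eq_divide flip: exp_add)
  finally show ?case .
qed

lemma harm_minus_one_le_ln_pred:
  assumes "n \<ge> 2"
  shows "harm n - 1 \<le> ln (real (n - 1)) + 1 / 2"
proof -
  obtain k where k: "n = Suc k" "k \<ge> 1"
    using assms by (cases n) auto
  have "harm k - ln (real k) \<le> harm 1 - ln (real (1::nat))"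
    using euler_mascheroni_sequence_decreasing[of 1 k] k by simp
  then have "harm k \<le> ln (real k) + 1"
    by (simp add: harm_expand)
  moreover have "inverse (real (Suc k)) \<le> 1 / 2"
    using k by (simp add: field_simps)
  ultimately show ?thesis
    using k by (simp add: harm_Suc)
qed

lemma exp1_minus_one_half_le_exp1_euler_mascheroni:
  "(exp 1 - 1) / 2 \<le> exp 1 * (euler_mascheroni :: real)"
proof -
  have "(exp 1 - 1) / 2 \<le> (1 :: real)"
    using exp_le by simp
  also have "\<dots> \<le> 2 * euler_mascheroni"
    using euler_mascheroni_gt_19_over_33 by simp
  also have "\<dots> \<le> exp 1 * euler_mascheroni"
    using exp_ge_add_one_self[of 1] euler_mascheroni_pos by (intro mult_right_mono) auto
  finally show ?thesis .
qed

theorem lemma5p2: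
  fixes n M1 M :: nat
  assumes "n \<ge> 2" and "M1 \<ge> 1"
    and "int M = \<lceil>exp 1 * (ln (real (n - 1)) + euler_mascheroni)\<rceil> + int M1"
  shows "(\<Sum>m = M + 1..n. real (stirling n m) / fact n) \<le> exp (- real M1)"
proof -
  let ?e = "exp (1 :: real)"
  define L where "L = ln (real (n - 1))"
  have L_nonneg: "0 \<le> L"
    using assms(1) by (simp add: L_def)
  have M_bound: "?e * (L + euler_mascheroni) + M1 \<le> M"
    using assms(3) unfolding L_def
    by (metis add_le_cancel_right le_of_int_ceiling of_int_add of_int_of_nat_eq)
  have "(?e - 1) * (harm n - 1) \<le> (?e - 1) * (L + 1 / 2)"
    using harm_minus_one_le_ln_pred[OF assms(1)] exp_ge_add_one_self[of 1]
    unfolding L_def by (intro mult_left_mono) auto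
  also have "\<dots> \<le> ?e * (L + euler_mascheroni)"
    using exp1_minus_one_half_le_exp1_euler_mascheroni L_nonneg by (simp add: algebra_simps)
  finally have exponent: "1 + (?e - 1) * (harm n - 1) - real (M + 1) \<le> - real M1"
    using M_bound by simp
  have "(\<Sum>m = M + 1..n. real (stirling n m) / fact n) = (\<Sum>m = M + 1..n. real (stirling n m)) / fact n"
    by (simp add: sum_divide_distrib)
  also have "\<dots> \<le> pochhammer ?e n / ?e ^ (M + 1) / fact n"
    by (intro divide_right_mono stirling_tail_le_pochhammer) simp_all
  also have "\<dots> = pochhammer ?e n / fact n / ?e ^ (M + 1)"
    by simp
  also have "\<dots> \<le> ?e * exp ((?e - 1) * (harm n - 1)) / ?e ^ (M + 1)"
    using assms(1) by (intro divide_right_mono pochhammer_div_fact_le_exp_harm) simp_all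
  also have "\<dots> = exp (1 + (?e - 1) * (harm n - 1) - real (M + 1))"
    by (simp add: exp_add exp_diff exp_of_nat_mult[symmetric])
  also have "\<dots> \<le> exp (- real M1)"
    using exponent by simp
  finally show ?thesis .
qed

end
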